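(* Let $X(t)$ be a Markov process on microstates, partitioned into finitely many macrostates, with macroscopic time step $\tau>0$ and decorrelation times $\tau_I$, and let each macrostate $I$ have a quasistationary distribution $\eta_I$. Let $(X(t),R(t),C(t))$ be the augmented Markov chain with time step $\tau$ on augmented states $(x,I,s)$, and let $T$ be its Markov kernel, $$T(x,I,s;dy,J,t) = \mathbb P^{x,I,s}\big[(X(\tau),R(\tau),C(\tau)) \in (dy,J,t)\big].$$ Define the projector $P$ on functions $f=f(x,I,s)$ of augmented states by $Pf(x,I,s) = \int \eta_I(dz)\, f(z,I,\tau_I)$, let $Q = \mathrm{Id}-P$, and for integers $n\ge 1$ let $K(n) = PT(QT)^{n-1}$. Let $\chi_J(x,I,s) = \delta_{I=J}$ and define matrices $$\mathcal K_{IJ}(n\tau) := K(n)\chi_J(x,I,s), \qquad \mathcal T_{IJ}(n\tau) := \int \eta_I(dx)\,\mathbb P^{x,I,\tau_I}\big[R(n\tau)=J\big]$$ (the former does not depend on $x$ or $s$). Then for every integer $n\ge 1$, $$\mathcal T(n\tau) = \sum_{m=1}^{n} \mathcal K(m\tau)\,\mathcal T((n-m)\tau).$$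
   Context: The macroscopic jump process $R(t)$ (defined at multiples of $\tau$) jumps from its current macrostate $I$ to $J\ne I$ at time $t$ iff $X(t-c)\in J$ for all $0\le c\le \tau_J$; otherwise it stays put. $C(t)$ is the consecutive time $X(t)$ has spent in its current macrostate, with the count stopped at $\tau_J$ if $X(t)\in J$. $\mathbb P^{x,I,s}$ denotes probability for the augmented chain started at $(X(0),R(0),C(0))=(x,I,s)$. A kernel $S(x,I,s;dy,J,t)$ acts on functions by $Sf(x,I,s) = \int\sum_{J,t} S(x,I,s;dy,J,t) f(y,J,t)$. The quasistationary distribution $\eta_I$ is a probability measure on $I$ with $\eta_I(\cdot)=\int\eta_I(dx)\mathbb P(X(t)\in\cdot\mid X(0)=x,\ X(s)\in I,\ s\le t)$ for all $t$. *)

theory Defs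
  imports "HOL-Probability.Probability"
begin

text \<open>Augmented states are triples (x, I, s): microstate x, macrostate label I,
  clock value s.\<close>

definition aug_space :: "'x measure \<Rightarrow> ('x \<times> 'i \<times> real) measure" where
  "aug_space M = M \<Otimes>\<^sub>M (count_space UNIV \<Otimes>\<^sub>M borel)"

definition kapply :: "('a \<Rightarrow> 'a measure) \<Rightarrow> ('a \<Rightarrow> real) \<Rightarrow> 'a \<Rightarrow> real" where
  "kapply S f a = (\<integral>b. f b \<partial>S a)"

definition projP :: "('i \<Rightarrow> 'x measure) \<Rightarrow> ('i \<Rightarrow> real)
    \<Rightarrow> ('x \<times> 'i \<times> real \<Rightarrow> real) \<Rightarrow> 'x \<times> 'i \<times> real \<Rightarrow> real" where
  "projP \<eta> \<tau>I f = (\<lambda>(x, I, s). \<integral>z. f (z, I, \<tau>I I) \<partial>\<eta> I)"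

definition projQ :: "('i \<Rightarrow> 'x measure) \<Rightarrow> ('i \<Rightarrow> real)
    \<Rightarrow> ('x \<times> 'i \<times> real \<Rightarrow> real) \<Rightarrow> 'x \<times> 'i \<times> real \<Rightarrow> real" where
  "projQ \<eta> \<tau>I f = (\<lambda>a. f a - projP \<eta> \<tau>I f a)"

definition Kop :: "('i \<Rightarrow> 'x measure) \<Rightarrow> ('i \<Rightarrow> real)
    \<Rightarrow> ('x \<times> 'i \<times> real \<Rightarrow> ('x \<times> 'i \<times> real) measure) \<Rightarrow> nat
    \<Rightarrow> ('x \<times> 'i \<times> real \<Rightarrow> real) \<Rightarrow> 'x \<times> 'i \<times> real \<Rightarrow> real" where
  "Kop \<eta> \<tau>I T n f =
     projP \<eta> \<tau>I (kapply T (((\<lambda>g. projQ \<eta> \<tau>I (kapply T g)) ^^ (n - 1)) f))"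

definition chi :: "'i \<Rightarrow> 'x \<times> 'i \<times> real \<Rightarrow> real" where
  "chi J = (\<lambda>(x, I, s). if I = J then 1 else 0)"

primrec nstep :: "'a measure \<Rightarrow> ('a \<Rightarrow> 'a measure) \<Rightarrow> nat \<Rightarrow> 'a \<Rightarrow> 'a measure" where
  "nstep A T 0 a = return A a"
| "nstep A T (Suc n) a = (nstep A T n a) \<bind> T"

definition calK :: "('i \<Rightarrow> 'x measure) \<Rightarrow> ('i \<Rightarrow> real)
    \<Rightarrow> ('x \<times> 'i \<times> real \<Rightarrow> ('x \<times> 'i \<times> real) measure) \<Rightarrow> nat
    \<Rightarrow> 'i \<Rightarrow> 'i \<Rightarrow> 'x \<Rightarrow> real \<Rightarrow> real" where
  "calK \<eta> \<tau>I T n I J x s = Kop \<eta> \<tau>I T n (chi J) (x, I, s)"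

definition calT :: "'x measure \<Rightarrow> ('i \<Rightarrow> 'x measure) \<Rightarrow> ('i \<Rightarrow> real)
    \<Rightarrow> ('x \<times> 'i \<times> real \<Rightarrow> ('x \<times> 'i \<times> real) measure) \<Rightarrow> nat
    \<Rightarrow> 'i \<Rightarrow> 'i \<Rightarrow> real" where
  "calT M \<eta> \<tau>I T n I J =
     (\<integral>x. measure (nstep (aug_space M) T n (x, I, \<tau>I I)) {b. fst (snd b) = J} \<partial>\<eta> I)"

end

theory Submission
  imports Defs
begin

text \<open>Writing \<open>T = T P + T Q\<close> and iterating gives, on bounded measurable functions, the
  renewal identity \<open>P T^n = (\<Sum>m = 1..n. K(m) P T^(n-m)) + K(n) Q\<close> with
  \<open>K(m) = P T (Q T)^(m-1)\<close>.  Applied to the indicator of \<open>R = J\<close> the remainder vanishes: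
  that indicator depends only on the macrostate, so \<open>P\<close> fixes it.  By Chapman--Kolmogorov,
  \<open>P T^k\<close> applied to the indicator is \<open>\<Sum>L. calT k L J \<chi>\<^sub>L\<close>, and linearity of \<open>K(m)\<close> turns
  the identity into the matrix equation.\<close>

lemma (in prob_space) bounded_measurable_integral:
  fixes f :: "'a \<Rightarrow> real"
  assumes "f \<in> borel_measurable M" and "\<And>x. x \<in> space M \<Longrightarrow> \<bar>f x\<bar> \<le> c"
  shows "integrable M f" and "\<bar>\<integral>x. f x \<partial>M\<bar> \<le> c"
proof -
  show int: "integrable M f"
    using assms by (intro integrable_const_bound[where B=c]) auto
  have "\<bar>\<integral>x. f x \<partial>M\<bar> \<le> (\<integral>x. \<bar>f x\<bar> \<partial>M)"
    using integral_norm_bound[of M f] by simp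
  also have "\<dots> \<le> (\<integral>x. c \<partial>M)"
    using assms(2) int by (intro integral_mono) auto
  finally show "\<bar>\<integral>x. f x \<partial>M\<bar> \<le> c"
    by (simp add: prob_space)
qed

locale augmented_chain =
  fixes M :: "'x measure" and \<eta> :: "'i \<Rightarrow> 'x measure" and \<tau>I :: "'i \<Rightarrow> real"
    and T :: "'x \<times> 'i \<times> real \<Rightarrow> ('x \<times> 'i \<times> real) measure"
  assumes eta_prob: "\<And>I. prob_space (\<eta> I)"
    and eta_sets: "\<And>I. sets (\<eta> I) = sets M"
    and T_kernel: "T \<in> measurable (aug_space M) (prob_algebra (aug_space M))"
begin

abbreviation A :: "('x \<times> 'i \<times> real) measure" where
  "A \<equiv> aug_space M"

abbreviation QT :: "('x \<times> 'i \<times> real \<Rightarrow> real) \<Rightarrow> 'x \<times> 'i \<times> real \<Rightarrow> real" where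
  "QT \<equiv> \<lambda>g. projQ \<eta> \<tau>I (kapply T g)"

lemma space_A: "space A = space M \<times> UNIV \<times> UNIV"
  by (simp add: aug_space_def space_pair_measure)

lemma space_eta: "space (\<eta> I) = space M"
  using eta_sets sets_eq_imp_space_eq by blast

lemma T_prob_algebra: "a \<in> space A \<Longrightarrow> T a \<in> space (prob_algebra A)"
  using measurable_space[OF T_kernel] .

lemma prob_space_T: "a \<in> space A \<Longrightarrow> prob_space (T a)"
  using T_prob_algebra by (simp add: space_prob_algebra)

lemma sets_T: "a \<in> space A \<Longrightarrow> sets (T a) = sets A"
  using T_prob_algebra by (simp add: space_prob_algebra)

lemma space_T: "a \<in> space A \<Longrightarrow> space (T a) = space A"
  using sets_T sets_eq_imp_space_eq by blast

lemma measurable_macrostate: "(\<lambda>a. G (fst (snd a)) :: real) \<in> borel_measurable A"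
proof -
  have "(\<lambda>a. fst (snd a)) \<in> A \<rightarrow>\<^sub>M count_space UNIV"
    unfolding aug_space_def by measurable
  then show ?thesis
    by (rule measurable_compose) simp
qed

lemma measurable_at_macrostate: "(\<lambda>z. (z, I, t)) \<in> measurable (\<eta> I) A"
  unfolding aug_space_def
  by (rule measurable_Pair[OF measurable_ident_sets[OF eta_sets] measurable_const])
    (simp add: space_pair_measure)

definition bounded_measurable :: "('x \<times> 'i \<times> real \<Rightarrow> real) \<Rightarrow> bool" where
  "bounded_measurable f \<longleftrightarrow> f \<in> borel_measurable A \<and> (\<exists>c. \<forall>a\<in>space A. \<bar>f a\<bar> \<le> c)"

lemma bounded_measurable_add_scaled:
  assumes "bounded_measurable f" and "bounded_measurable g"
  shows "bounded_measurable (\<lambda>a. f a + c * g a)"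
proof -
  obtain cf where f: "f \<in> borel_measurable A" "\<And>a. a \<in> space A \<Longrightarrow> \<bar>f a\<bar> \<le> cf"
    using assms(1) unfolding bounded_measurable_def by blast
  obtain cg where g: "g \<in> borel_measurable A" "\<And>a. a \<in> space A \<Longrightarrow> \<bar>g a\<bar> \<le> cg"
    using assms(2) unfolding bounded_measurable_def by blast
  have "\<bar>f a + c * g a\<bar> \<le> cf + \<bar>c\<bar> * cg" if "a \<in> space A" for a
  proof -
    have "\<bar>c * g a\<bar> \<le> \<bar>c\<bar> * cg"
      using g(2)[OF that] by (simp add: abs_mult mult_left_mono)
    then show ?thesis
      using f(2)[OF that] abs_triangle_ineq[of "f a" "c * g a"] by linarith
  qed
  moreover have "(\<lambda>a. f a + c * g a) \<in> borel_measurable A"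
    using f(1) g(1) by measurable
  ultimately show ?thesis
    unfolding bounded_measurable_def by blast
qed

lemma bounded_measurable_zero: "bounded_measurable (\<lambda>a. 0)"
  unfolding bounded_measurable_def by auto

lemma bounded_measurable_sum:
  assumes "finite S" and "\<And>L. L \<in> S \<Longrightarrow> bounded_measurable (f L)"
  shows "bounded_measurable (\<lambda>a. \<Sum>L\<in>S. c L * f L a)"
  using assms
proof (induction S rule: finite_induct)
  case empty
  then show ?case
    by (simp add: bounded_measurable_zero)
next
  case (insert L S)
  then have "bounded_measurable (\<lambda>a. (\<Sum>L\<in>S. c L * f L a) + c L * f L a)"
    by (intro bounded_measurable_add_scaled) auto
  then show ?case
    using insert by (simp add: add.commute)
qed

lemma integral_kernel_bound:
  assumes "f \<in> borel_measurable A" and "\<And>b. b \<in> space A \<Longrightarrow> \<bar>f b\<bar> \<le> c" and "a \<in> space A"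
  shows "integrable (T a) f" and "\<bar>kapply T f a\<bar> \<le> c"
proof -
  have meas: "f \<in> borel_measurable (T a)"
    using assms(1) measurable_cong_sets[OF sets_T[OF assms(3)] refl, of "borel :: real measure"] by simp
  have bound: "\<And>b. b \<in> space (T a) \<Longrightarrow> \<bar>f b\<bar> \<le> c"
    using assms(2) space_T[OF assms(3)] by simp
  show "integrable (T a) f" and "\<bar>kapply T f a\<bar> \<le> c"
    unfolding kapply_def
    using prob_space.bounded_measurable_integral[OF prob_space_T[OF assms(3)] meas bound] by auto
qed

lemma integral_eta_bound:
  fixes f :: "'x \<times> 'i \<times> real \<Rightarrow> real"
  assumes "f \<in> borel_measurable A" and "\<And>b. b \<in> space A \<Longrightarrow> \<bar>f b\<bar> \<le> c"
  shows "integrable (\<eta> I) (\<lambda>z. f (z, I, t))" and "\<bar>\<integral>z. f (z, I, t) \<partial>\<eta> I\<bar> \<le> c"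
proof -
  have meas: "(\<lambda>z. f (z, I, t)) \<in> borel_measurable (\<eta> I)"
    using measurable_compose[OF measurable_at_macrostate assms(1)] by simp
  have bound: "\<And>z. z \<in> space (\<eta> I) \<Longrightarrow> \<bar>f (z, I, t)\<bar> \<le> c"
    using assms(2) by (simp add: space_eta space_A)
  show "integrable (\<eta> I) (\<lambda>z. f (z, I, t))" and "\<bar>\<integral>z. f (z, I, t) \<partial>\<eta> I\<bar> \<le> c"
    using prob_space.bounded_measurable_integral[OF eta_prob meas bound] by auto
qed

lemma integrable_kernel: "bounded_measurable f \<Longrightarrow> a \<in> space A \<Longrightarrow> integrable (T a) f"
  unfolding bounded_measurable_def using integral_kernel_bound(1) by blast

lemma integrable_eta: "bounded_measurable f \<Longrightarrow> integrable (\<eta> I) (\<lambda>z. f (z, I, t))"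
  unfolding bounded_measurable_def using integral_eta_bound(1) by blast

text \<open>The kernel \<open>T\<close> is only specified on \<open>space A\<close>, so the operators below are linear
  only up to equality on \<open>space A\<close>.\<close>

definition eq_on_space :: "('x \<times> 'i \<times> real \<Rightarrow> real) \<Rightarrow> ('x \<times> 'i \<times> real \<Rightarrow> real) \<Rightarrow> bool" where
  "eq_on_space f g \<longleftrightarrow> (\<forall>a\<in>space A. f a = g a)"

lemma eq_on_space_trans [trans]: "eq_on_space f g \<Longrightarrow> eq_on_space g h \<Longrightarrow> eq_on_space f h"
  unfolding eq_on_space_def by auto

definition linear_op :: "(('x \<times> 'i \<times> real \<Rightarrow> real) \<Rightarrow> 'x \<times> 'i \<times> real \<Rightarrow> real) \<Rightarrow> bool" where
  "linear_op F \<longleftrightarrow>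
     (\<forall>f. bounded_measurable f \<longrightarrow> bounded_measurable (F f)) \<and>
     (\<forall>f g. eq_on_space f g \<longrightarrow> eq_on_space (F f) (F g)) \<and>
     (\<forall>f g c. bounded_measurable f \<longrightarrow> bounded_measurable g \<longrightarrow>
        eq_on_space (F (\<lambda>a. f a + c * g a)) (\<lambda>a. F f a + c * F g a))"

lemma linear_opD:
  assumes "linear_op F"
  shows "bounded_measurable f \<Longrightarrow> bounded_measurable (F f)"
    and "eq_on_space f g \<Longrightarrow> eq_on_space (F f) (F g)"
    and "bounded_measurable f \<Longrightarrow> bounded_measurable g \<Longrightarrow>
      eq_on_space (F (\<lambda>a. f a + c * g a)) (\<lambda>a. F f a + c * F g a)"
  using assms unfolding linear_op_def by blast+

lemma linear_op_id: "linear_op id"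
  unfolding linear_op_def eq_on_space_def by auto

lemma linear_op_comp:
  assumes F: "linear_op F" and G: "linear_op G"
  shows "linear_op (F \<circ> G)"
  unfolding linear_op_def comp_def
proof (intro conjI allI impI)
  fix f g :: "'x \<times> 'i \<times> real \<Rightarrow> real" and c :: real
  assume f: "bounded_measurable f" and g: "bounded_measurable g"
  have "eq_on_space (F (G (\<lambda>a. f a + c * g a))) (F (\<lambda>a. G f a + c * G g a))"
    using f g by (intro linear_opD[OF F] linear_opD[OF G])
  also have "eq_on_space \<dots> (\<lambda>a. F (G f) a + c * F (G g) a)"
    using f g by (intro linear_opD[OF F] linear_opD[OF G])
  finally show "eq_on_space (F (G (\<lambda>a. f a + c * g a))) (\<lambda>a. F (G f) a + c * F (G g) a)" .
qed (simp_all add: linear_opD[OF F] linear_opD[OF G])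

lemma linear_op_funpow: "linear_op F \<Longrightarrow> linear_op (F ^^ k)"
  by (induction k) (simp_all add: linear_op_id linear_op_comp)

lemma linear_op_kapply: "linear_op (kapply T)"
  unfolding linear_op_def
proof (intro conjI allI impI)
  fix f assume "bounded_measurable f"
  then obtain c where f: "f \<in> borel_measurable A" "\<And>b. b \<in> space A \<Longrightarrow> \<bar>f b\<bar> \<le> c"
    unfolding bounded_measurable_def by blast
  have "kapply T f \<in> borel_measurable A"
    unfolding kapply_def
    by (rule measurable_compose[OF measurable_prob_algebraD[OF T_kernel]
          integral_measurable_subprob_algebra[OF f(1)]])
  then show "bounded_measurable (kapply T f)"
    using integral_kernel_bound(2)[OF f] unfolding bounded_measurable_def by blast
next
  fix f g :: "'x \<times> 'i \<times> real \<Rightarrow> real"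
  assume "eq_on_space f g"
  then show "eq_on_space (kapply T f) (kapply T g)"
    unfolding eq_on_space_def kapply_def
    by (auto intro: Bochner_Integration.integral_cong simp: space_T)
next
  fix f g :: "'x \<times> 'i \<times> real \<Rightarrow> real" and c :: real
  assume f: "bounded_measurable f" and g: "bounded_measurable g"
  show "eq_on_space (kapply T (\<lambda>a. f a + c * g a)) (\<lambda>a. kapply T f a + c * kapply T g a)"
    using integrable_kernel[OF f] integrable_kernel[OF g] by (simp add: eq_on_space_def kapply_def)
qed

lemma projP_macrostate:
  "projP \<eta> \<tau>I f a = (\<integral>z. f (z, fst (snd a), \<tau>I (fst (snd a))) \<partial>\<eta> (fst (snd a)))"
  by (cases a) (simp add: projP_def)

lemma projP_cong: "eq_on_space f g \<Longrightarrow> projP \<eta> \<tau>I f = projP \<eta> \<tau>I g"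
  unfolding eq_on_space_def projP_macrostate
  by (intro ext Bochner_Integration.integral_cong) (auto simp: space_eta space_A)

lemma projP_add_scaled:
  assumes "bounded_measurable f" and "bounded_measurable g"
  shows "projP \<eta> \<tau>I (\<lambda>a. f a + c * g a) = (\<lambda>a. projP \<eta> \<tau>I f a + c * projP \<eta> \<tau>I g a)"
  using integrable_eta[OF assms(1)] integrable_eta[OF assms(2)]
  by (simp add: fun_eq_iff projP_macrostate)

lemma bounded_measurable_projP:
  assumes "bounded_measurable f"
  shows "bounded_measurable (projP \<eta> \<tau>I f)"
proof -
  obtain c where f: "f \<in> borel_measurable A" "\<And>b. b \<in> space A \<Longrightarrow> \<bar>f b\<bar> \<le> c"
    using assms unfolding bounded_measurable_def by blast
  have "projP \<eta> \<tau>I f = (\<lambda>a. (\<lambda>I. \<integral>z. f (z, I, \<tau>I I) \<partial>\<eta> I) (fst (snd a)))"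
    by (intro ext) (simp add: projP_macrostate)
  then have "projP \<eta> \<tau>I f \<in> borel_measurable A"
    using measurable_macrostate[of "\<lambda>I. \<integral>z. f (z, I, \<tau>I I) \<partial>\<eta> I"] by simp
  moreover have "\<bar>projP \<eta> \<tau>I f a\<bar> \<le> c" for a
    unfolding projP_macrostate by (rule integral_eta_bound(2)[OF f])
  ultimately show ?thesis
    unfolding bounded_measurable_def by blast
qed

lemma linear_op_projP: "linear_op (projP \<eta> \<tau>I)"
  unfolding linear_op_def
proof (intro conjI allI impI)
  fix f g :: "'x \<times> 'i \<times> real \<Rightarrow> real"
  assume "eq_on_space f g"
  then have "projP \<eta> \<tau>I f = projP \<eta> \<tau>I g"
    by (rule projP_cong)
  then show "eq_on_space (projP \<eta> \<tau>I f) (projP \<eta> \<tau>I g)"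
    by (simp add: eq_on_space_def)
next
  fix f g :: "'x \<times> 'i \<times> real \<Rightarrow> real" and c :: real
  assume "bounded_measurable f" "bounded_measurable g"
  then show "eq_on_space (projP \<eta> \<tau>I (\<lambda>a. f a + c * g a)) (\<lambda>a. projP \<eta> \<tau>I f a + c * projP \<eta> \<tau>I g a)"
    by (simp add: projP_add_scaled eq_on_space_def)
qed (rule bounded_measurable_projP)

lemma linear_op_projQ: "linear_op (projQ \<eta> \<tau>I)"
  unfolding linear_op_def
proof (intro conjI allI impI)
  fix f assume "bounded_measurable f"
  then show "bounded_measurable (projQ \<eta> \<tau>I f)"
    using bounded_measurable_add_scaled[of f "projP \<eta> \<tau>I f" "-1"] bounded_measurable_projP
    by (simp add: projQ_def)
next
  fix f g :: "'x \<times> 'i \<times> real \<Rightarrow> real"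
  assume fg: "eq_on_space f g"
  then show "eq_on_space (projQ \<eta> \<tau>I f) (projQ \<eta> \<tau>I g)"
    using projP_cong[OF fg] by (simp add: projQ_def eq_on_space_def)
next
  fix f g :: "'x \<times> 'i \<times> real \<Rightarrow> real" and c :: real
  assume "bounded_measurable f" "bounded_measurable g"
  then have "projP \<eta> \<tau>I (\<lambda>a. f a + c * g a) = (\<lambda>a. projP \<eta> \<tau>I f a + c * projP \<eta> \<tau>I g a)"
    by (rule projP_add_scaled)
  then show "eq_on_space (projQ \<eta> \<tau>I (\<lambda>a. f a + c * g a)) (\<lambda>a. projQ \<eta> \<tau>I f a + c * projQ \<eta> \<tau>I g a)"
    unfolding projQ_def eq_on_space_def by (simp add: right_diff_distrib)
qed

lemma linear_op_QT: "linear_op QT"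
  using linear_op_comp[OF linear_op_projQ linear_op_kapply] by (simp add: comp_def)

lemma linear_op_kapply_QT_funpow: "linear_op (kapply T \<circ> QT ^^ k)"
  by (intro linear_op_comp linear_op_kapply linear_op_funpow linear_op_QT)

lemma Kop_eq_projP: "Kop \<eta> \<tau>I T m f = projP \<eta> \<tau>I ((kapply T \<circ> QT ^^ (m - 1)) f)"
  by (simp add: Kop_def)

lemma Kop_Suc: "1 \<le> m \<Longrightarrow> Kop \<eta> \<tau>I T (Suc m) f = Kop \<eta> \<tau>I T m (QT f)"
  by (cases m) (simp_all add: Kop_def funpow_Suc_right del: funpow.simps)

lemma Kop_add_scaled:
  assumes "bounded_measurable f" and "bounded_measurable g"
  shows "Kop \<eta> \<tau>I T m (\<lambda>a. f a + c * g a) = (\<lambda>a. Kop \<eta> \<tau>I T m f a + c * Kop \<eta> \<tau>I T m g a)"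
proof -
  let ?G = "kapply T \<circ> QT ^^ (m - 1)"
  have "Kop \<eta> \<tau>I T m (\<lambda>a. f a + c * g a) = projP \<eta> \<tau>I (\<lambda>a. ?G f a + c * ?G g a)"
    unfolding Kop_eq_projP using assms
    by (intro projP_cong linear_opD(3)[OF linear_op_kapply_QT_funpow])
  also have "\<dots> = (\<lambda>a. Kop \<eta> \<tau>I T m f a + c * Kop \<eta> \<tau>I T m g a)"
    unfolding Kop_eq_projP using assms
    by (intro projP_add_scaled linear_opD(1)[OF linear_op_kapply_QT_funpow])
  finally show ?thesis .
qed

lemma Kop_zero: "Kop \<eta> \<tau>I T m (\<lambda>a. 0) = (\<lambda>a. 0)"
  using Kop_add_scaled[OF bounded_measurable_zero bounded_measurable_zero, of m 1]
  by (simp add: fun_eq_iff)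

lemma Kop_sum:
  assumes "finite S" and "\<And>L. L \<in> S \<Longrightarrow> bounded_measurable (f L)"
  shows "Kop \<eta> \<tau>I T m (\<lambda>a. \<Sum>L\<in>S. c L * f L a) p = (\<Sum>L\<in>S. c L * Kop \<eta> \<tau>I T m (f L) p)"
  using assms
proof (induction S rule: finite_induct)
  case empty
  then show ?case
    by (simp add: Kop_zero)
next
  case (insert L S)
  have "Kop \<eta> \<tau>I T m (\<lambda>a. \<Sum>L\<in>insert L S. c L * f L a)
      = Kop \<eta> \<tau>I T m (\<lambda>a. (\<Sum>L\<in>S. c L * f L a) + c L * f L a)"
    using insert.hyps by (simp add: add.commute)
  also have "\<dots> = (\<lambda>a. Kop \<eta> \<tau>I T m (\<lambda>a. \<Sum>L\<in>S. c L * f L a) a + c L * Kop \<eta> \<tau>I T m (f L) a)"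
    using insert.prems insert.hyps by (intro Kop_add_scaled bounded_measurable_sum) auto
  finally show ?case
    using insert by (simp add: add.commute)
qed

lemma Kop_split:
  assumes "bounded_measurable f"
  shows "Kop \<eta> \<tau>I T m f p = Kop \<eta> \<tau>I T m (projP \<eta> \<tau>I f) p + Kop \<eta> \<tau>I T m (projQ \<eta> \<tau>I f) p"
proof -
  have "(\<lambda>a. projP \<eta> \<tau>I f a + 1 * projQ \<eta> \<tau>I f a) = f"
    by (simp add: projQ_def)
  then show ?thesis
    using Kop_add_scaled[OF linear_opD(1)[OF linear_op_projP assms] linear_opD(1)[OF linear_op_projQ assms],
        of m 1]
    by simp
qed

lemma projP_kapply_funpow_renewal:
  assumes "bounded_measurable g" and "1 \<le> k"
  shows "projP \<eta> \<tau>I ((kapply T ^^ k) g) p =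
    (\<Sum>m = 1..k. Kop \<eta> \<tau>I T m (projP \<eta> \<tau>I ((kapply T ^^ (k - m)) g)) p)
      + Kop \<eta> \<tau>I T k (projQ \<eta> \<tau>I g) p"
  using assms(2) assms(1)
proof (induction k arbitrary: g rule: nat_induct_at_least)
  case base
  have "projP \<eta> \<tau>I ((kapply T ^^ 1) g) p = Kop \<eta> \<tau>I T 1 g p"
    by (simp add: Kop_def)
  also have "\<dots> = Kop \<eta> \<tau>I T 1 (projP \<eta> \<tau>I g) p + Kop \<eta> \<tau>I T 1 (projQ \<eta> \<tau>I g) p"
    by (rule Kop_split[OF base])
  finally show ?case
    by simp
next
  case (Suc k)
  have Tg: "bounded_measurable (kapply T g)"
    using linear_opD(1)[OF linear_op_kapply Suc.prems] .
  have shift: "(kapply T ^^ (k - m)) (kapply T g) = (kapply T ^^ (Suc k - m)) g" if "m \<le> k" for m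
    using that by (simp add: Suc_diff_le funpow_Suc_right del: funpow.simps)
  have "projP \<eta> \<tau>I ((kapply T ^^ Suc k) g) p = projP \<eta> \<tau>I ((kapply T ^^ k) (kapply T g)) p"
    by (simp add: funpow_Suc_right del: funpow.simps)
  also have "\<dots> = (\<Sum>m = 1..k. Kop \<eta> \<tau>I T m (projP \<eta> \<tau>I ((kapply T ^^ (Suc k - m)) g)) p)
      + Kop \<eta> \<tau>I T (Suc k) g p"
    using Suc.IH[OF Tg] Suc.hyps by (simp add: shift Kop_Suc)
  also have "\<dots> = (\<Sum>m = 1..Suc k. Kop \<eta> \<tau>I T m (projP \<eta> \<tau>I ((kapply T ^^ (Suc k - m)) g)) p)
      + Kop \<eta> \<tau>I T (Suc k) (projQ \<eta> \<tau>I g) p"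
    using Kop_split[OF Suc.prems] by simp
  finally show ?case .
qed

lemma nstep_in_prob_algebra: "a \<in> space A \<Longrightarrow> nstep A T k a \<in> space (prob_algebra A)"
proof (induction k)
  case 0
  then show ?case
    by (simp add: space_prob_algebra prob_space_return)
next
  case (Suc k)
  then show ?case
    by (simp add: space_prob_algebra prob_space_bind'[OF _ T_kernel] sets_bind'[OF _ T_kernel])
qed

lemma integral_nstep:
  assumes "bounded_measurable f" and "a \<in> space A"
  shows "(\<integral>b. f b \<partial>nstep A T k a) = (kapply T ^^ k) f a"
  using assms(1)
proof (induction k arbitrary: f)
  case 0
  then show ?case
    using assms(2) by (simp add: integral_return bounded_measurable_def)
next
  case (Suc k)
  obtain c where f: "f \<in> borel_measurable A" "\<And>b. b \<in> space A \<Longrightarrow> \<bar>f b\<bar> \<le> c"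
    using Suc.prems unfolding bounded_measurable_def by blast
  let ?N = "nstep A T k a"
  have N: "sets ?N = sets A" "prob_space ?N"
    using nstep_in_prob_algebra[OF assms(2)] by (auto simp: space_prob_algebra)
  have T: "T \<in> measurable ?N (subprob_algebra A)"
    using measurable_prob_algebraD[OF T_kernel] measurable_cong_sets[OF N(1) refl, of "subprob_algebra A"]
    by simp
  have fin: "finite_measure ?N"
    using N(2) unfolding prob_space_def by blast
  have T_total: "AE b in ?N. emeasure (T b) (space (T b)) \<le> ennreal 1"
    using sets_eq_imp_space_eq[OF N(1)]
    by (intro AE_I2) (simp add: prob_space.emeasure_space_1 prob_space_T)
  have "(\<integral>b. f b \<partial>nstep A T (Suc k) a) = (\<integral>b. kapply T f b \<partial>?N)"
    unfolding nstep.simps kapply_def by (rule integral_bind[OF f T fin T_total])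
  also have "\<dots> = (kapply T ^^ Suc k) f a"
    using Suc.IH[OF linear_opD(1)[OF linear_op_kapply Suc.prems]]
    by (simp add: funpow_Suc_right del: funpow.simps)
  finally show ?case .
qed

text \<open>\<open>measure N S\<close> is \<open>0\<close> for \<open>S \<notin> sets N\<close>, and the event \<open>R = J\<close> belongs to \<open>sets A\<close>
  only when \<open>space M = UNIV\<close>; the guard makes the indicator integrate to
  \<open>measure N {R = J}\<close> in both cases.\<close>

definition macro_indicator :: "'i \<Rightarrow> 'x \<times> 'i \<times> real \<Rightarrow> real" where
  "macro_indicator J = (if {b. fst (snd b) = J} \<in> sets A then chi J else (\<lambda>b. 0))"

lemma chi_macrostate: "chi J a = (if fst (snd a) = J then 1 else 0)"
  by (cases a) (simp add: chi_def)

lemma bounded_measurable_chi: "bounded_measurable (chi J)"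
proof -
  have eq: "chi J = (\<lambda>a. (\<lambda>I. if I = J then 1 else 0) (fst (snd a)))"
    by (simp add: fun_eq_iff chi_macrostate)
  have "chi J \<in> borel_measurable A"
    using measurable_macrostate[of "\<lambda>I. if I = J then 1 else 0"] unfolding eq .
  moreover have "\<bar>chi J a\<bar> \<le> 1" for a
    by (simp add: chi_macrostate)
  ultimately show ?thesis
    unfolding bounded_measurable_def by blast
qed

lemma bounded_measurable_macro_indicator: "bounded_measurable (macro_indicator J)"
  by (simp add: macro_indicator_def bounded_measurable_chi bounded_measurable_zero)

lemma measure_macrostate_eq_integral:
  assumes "N \<in> space (prob_algebra A)"
  shows "measure N {b. fst (snd b) = J} = (\<integral>b. macro_indicator J b \<partial>N)"
proof (cases "{b. fst (snd b) = J} \<in> sets A")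
  case True
  have "sets N = sets A"
    using assms by (simp add: space_prob_algebra)
  then have "{b. fst (snd b) = J} \<inter> space N = {b. fst (snd b) = J}"
    using True sets.sets_into_space by auto
  moreover have "macro_indicator J = indicator {b. fst (snd b) = J}"
    using True by (simp add: macro_indicator_def fun_eq_iff chi_macrostate)
  ultimately show ?thesis
    by simp
next
  case False
  then have "{b. fst (snd b) = J} \<notin> sets N"
    using assms by (simp add: space_prob_algebra)
  then show ?thesis
    using False by (simp add: macro_indicator_def measure_notin_sets)
qed

lemma projP_chi: "projP \<eta> \<tau>I (chi J) = chi J"
  by (simp add: fun_eq_iff projP_macrostate chi_macrostate prob_space.prob_space[OF eta_prob])

lemma projP_macro_indicator: "projP \<eta> \<tau>I (macro_indicator J) = macro_indicator J"
proof (cases "{b. fst (snd b) = J} \<in> sets A")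
  case True
  then show ?thesis
    by (simp add: macro_indicator_def projP_chi)
next
  case False
  then show ?thesis
    by (simp add: macro_indicator_def fun_eq_iff projP_macrostate)
qed

lemma projQ_macro_indicator: "projQ \<eta> \<tau>I (macro_indicator J) = (\<lambda>a. 0)"
  by (simp add: projQ_def projP_macro_indicator)

lemma calT_eq_projP:
  "calT M \<eta> \<tau>I T k L J = projP \<eta> \<tau>I ((kapply T ^^ k) (macro_indicator J)) (x, L, s)"
  unfolding calT_def projP_macrostate
proof (simp, intro Bochner_Integration.integral_cong refl)
  fix z assume "z \<in> space (\<eta> L)"
  then have "(z, L, \<tau>I L) \<in> space A"
    by (simp add: space_eta space_A)
  then show "measure (nstep A T k (z, L, \<tau>I L)) {b. fst (snd b) = J}
      = (kapply T ^^ k) (macro_indicator J) (z, L, \<tau>I L)"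
    by (simp add: measure_macrostate_eq_integral nstep_in_prob_algebra integral_nstep
        bounded_measurable_macro_indicator)
qed

lemma projP_eq_sum_chi:
  assumes "finite (UNIV :: 'i set)"
  shows "projP \<eta> \<tau>I f a = (\<Sum>L\<in>UNIV. projP \<eta> \<tau>I f (x, L, s) * chi L a)"
proof -
  have "(\<Sum>L\<in>UNIV. projP \<eta> \<tau>I f (x, L, s) * chi L a)
      = (\<Sum>L\<in>UNIV. if L = fst (snd a) then projP \<eta> \<tau>I f (x, L, s) else 0)"
    by (intro sum.cong) (auto simp: chi_macrostate)
  then show ?thesis
    using assms by (simp add: projP_macrostate)
qed

lemma calT_renewal:
  assumes "finite (UNIV :: 'i set)" and "1 \<le> n"
  shows "calT M \<eta> \<tau>I T n I J =
    (\<Sum>m = 1..n. \<Sum>L\<in>UNIV. calK \<eta> \<tau>I T m I L x s * calT M \<eta> \<tau>I T (n - m) L J)"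
proof -
  let ?h = "macro_indicator J"
  have projP_pow: "projP \<eta> \<tau>I ((kapply T ^^ k) ?h) = (\<lambda>a. \<Sum>L\<in>UNIV. calT M \<eta> \<tau>I T k L J * chi L a)"
    for k
  proof
    fix a
    show "projP \<eta> \<tau>I ((kapply T ^^ k) ?h) a = (\<Sum>L\<in>UNIV. calT M \<eta> \<tau>I T k L J * chi L a)"
      unfolding calT_eq_projP[where x=x and s=s] by (rule projP_eq_sum_chi[OF assms(1)])
  qed
  have "calT M \<eta> \<tau>I T n I J = projP \<eta> \<tau>I ((kapply T ^^ n) ?h) (x, I, s)"
    by (rule calT_eq_projP)
  also have "\<dots> = (\<Sum>m = 1..n. Kop \<eta> \<tau>I T m (projP \<eta> \<tau>I ((kapply T ^^ (n - m)) ?h)) (x, I, s))"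
    using projP_kapply_funpow_renewal[OF bounded_measurable_macro_indicator assms(2)]
    by (simp add: projQ_macro_indicator Kop_zero)
  also have "\<dots> = (\<Sum>m = 1..n. \<Sum>L\<in>UNIV. calK \<eta> \<tau>I T m I L x s * calT M \<eta> \<tau>I T (n - m) L J)"
    by (simp add: projP_pow Kop_sum[OF assms(1) bounded_measurable_chi] calK_def) (simp add: mult.commute)
  finally show ?thesis .
qed

end

theorem theorem2:
  fixes M :: "'x measure"
    and mac :: "'x \<Rightarrow> 'i::finite"
    and \<eta> :: "'i \<Rightarrow> 'x measure"
    and \<tau> :: real
    and \<tau>I :: "'i \<Rightarrow> real"
    and T :: "'x \<times> 'i \<times> real \<Rightarrow> ('x \<times> 'i \<times> real) measure"
    and n :: nat
  assumes tau_pos: "\<tau> > 0"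
    and tauI_pos: "\<And>I. \<tau>I I > 0"
    and mac_meas: "mac \<in> measurable M (count_space UNIV)"
    and eta_prob: "\<And>I. prob_space (\<eta> I)"
    and eta_sets: "\<And>I. sets (\<eta> I) = sets M"
    and eta_supp: "\<And>I. AE z in \<eta> I. mac z = I"
    and T_kernel: "T \<in> measurable (aug_space M) (prob_algebra (aug_space M))"
    and n_pos: "n \<ge> 1"
  shows "\<forall>x s. calT M \<eta> \<tau>I T n I J =
           (\<Sum>m = 1..n. \<Sum>L\<in>UNIV. calK \<eta> \<tau>I T m I L x s * calT M \<eta> \<tau>I T (n - m) L J)"
proof -
  interpret augmented_chain M \<eta> \<tau>I T
    using eta_prob eta_sets T_kernel by (simp add: augmented_chain_def)
  show ?thesis
    using calT_renewal[OF finite n_pos] by blast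
qed

end
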